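(* Let $H \in \mathcal{M}_n(\mathbb{R})$ be a real symmetric matrix whose largest eigenvalue (spectral radius) is simple. Then $H$ has exactly $k$ distinct eigenvalues, where $2 \le k \le n$, if and only if there are $k$ distinct real numbers $\lambda_1, \lambda_2, \ldots, \lambda_k$ such that (i) $H - \lambda_i I$ is a singular matrix for every $2 \le i \le k$; and (ii) $\prod_{i=2}^{k}(H - \lambda_i I) = b\,\mathbf{y}\mathbf{y}^T$, where $b$ is a positive real number, $\mathbf{y} \in \mathbb{R}^n\setminus\{\mathbf{0}\}$ and $H\mathbf{y} = \lambda_1\mathbf{y}$. Moreover, in this case $\lambda_1, \ldots, \lambda_k$ are exactly the $k$ distinct eigenvalues of $H$.
   Context: $\mathcal{M}_n(\mathbb{R})$ is the set of $n\times n$ real matrices and $I$ the identity matrix. The spectral radius here means the largest eigenvalue; it is simple if its algebraic multiplicity is $1$. *)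

theory Defs
  imports "Jordan_Normal_Form.Char_Poly" "Jordan_Normal_Form.Determinant"
begin

definition largest_eigenvalue :: "real mat \<Rightarrow> real" where
  "largest_eigenvalue H = Max {x. eigenvalue H x}"

definition mat_prod_list :: "nat \<Rightarrow> real mat list \<Rightarrow> real mat" where
  "mat_prod_list n As = foldr (\<lambda>A B. A * B) As (1\<^sub>m n)"

definition outer_mat :: "real vec \<Rightarrow> real mat" where
  "outer_mat y = mat (dim_vec y) (dim_vec y) (\<lambda>(i,j). y $ i * y $ j)"

end

theory Submission
  imports Defs "Jordan_Normal_Form.Schur_Decomposition"
begin

text \<open>
  Write P for the product of the H - \<lambda>_i I over i \<ge> 2. If \<lambda>_1, ..., \<lambda>_k are the distinct
  eigenvalues of H, with \<lambda>_1 the largest, then (H - \<lambda>_1 I) P = 0: after Schur triangularisation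
  the product over all distinct eigenvalues is strictly upper triangular, hence nilpotent, and a
  nilpotent symmetric real matrix vanishes. So every column of P lies in the \<lambda>_1-eigenspace, which
  is the line through y because \<lambda>_1 is simple, and symmetry of P gives P = b y y^T; finally
  b > 0 because P y = \<Prod>(\<lambda>_1 - \<lambda>_i) y. Conversely, if P = b y y^T and v is an eigenvector
  for an eigenvalue \<mu> not in the list, then \<Prod>(\<mu> - \<lambda>_i) v = P v is a nonzero multiple of y,
  which forces \<mu> = \<lambda>_1.
\<close>

hide_const (open) Coset.order

definition shifted_mat_prod :: "nat \<Rightarrow> 'a :: comm_ring_1 mat \<Rightarrow> 'a list \<Rightarrow> 'a mat" where
  "shifted_mat_prod n A ms = foldr (\<lambda>\<mu> X. (A - \<mu> \<cdot>\<^sub>m 1\<^sub>m n) * X) ms (1\<^sub>m n)"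

lemma shifted_mat_prod_simps [simp]:
  "shifted_mat_prod n A [] = 1\<^sub>m n"
  "shifted_mat_prod n A (\<mu> # ms) = (A - \<mu> \<cdot>\<^sub>m 1\<^sub>m n) * shifted_mat_prod n A ms"
  by (simp_all add: shifted_mat_prod_def)

lemma shifted_mat_prod_carrier [simp]:
  "A \<in> carrier_mat n n \<Longrightarrow> shifted_mat_prod n A ms \<in> carrier_mat n n"
  by (induct ms) auto

lemma mat_prod_list_shifted:
  "mat_prod_list n (map (\<lambda>i. H - lam i \<cdot>\<^sub>m 1\<^sub>m n) xs) = shifted_mat_prod n H (map lam xs)"
  by (induct xs) (simp_all add: mat_prod_list_def)

lemma shift_mult_vec:
  assumes A: "(A :: 'a :: comm_ring_1 mat) \<in> carrier_mat n n" and v: "v \<in> carrier_vec n"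
  shows "(A - \<mu> \<cdot>\<^sub>m 1\<^sub>m n) *\<^sub>v v = A *\<^sub>v v - \<mu> \<cdot>\<^sub>v v"
  using A v by (subst minus_mult_distrib_mat_vec[of _ n n]) auto

lemma shift_mult_vec_eq_0_iff:
  assumes A: "(A :: 'a :: comm_ring_1 mat) \<in> carrier_mat n n" and v: "v \<in> carrier_vec n"
  shows "(A - \<mu> \<cdot>\<^sub>m 1\<^sub>m n) *\<^sub>v v = 0\<^sub>v n \<longleftrightarrow> A *\<^sub>v v = \<mu> \<cdot>\<^sub>v v"
  using A v by (auto simp: shift_mult_vec vec_eq_iff)

lemma shifted_mat_prod_mult_eigenvector:
  assumes A: "(A :: 'a :: field mat) \<in> carrier_mat n n" and v: "v \<in> carrier_vec n"
    and Av: "A *\<^sub>v v = e \<cdot>\<^sub>v v"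
  shows "shifted_mat_prod n A ms *\<^sub>v v = (\<Prod>\<mu>\<leftarrow>ms. e - \<mu>) \<cdot>\<^sub>v v"
proof (induct ms)
  case (Cons \<mu> ms)
  have "shifted_mat_prod n A (\<mu> # ms) *\<^sub>v v
      = (A - \<mu> \<cdot>\<^sub>m 1\<^sub>m n) *\<^sub>v (shifted_mat_prod n A ms *\<^sub>v v)"
    using A v by (simp, intro assoc_mult_mat_vec[of _ n n _ n]) auto
  also have "\<dots> = (A - \<mu> \<cdot>\<^sub>m 1\<^sub>m n) *\<^sub>v ((\<Prod>\<mu>\<leftarrow>ms. e - \<mu>) \<cdot>\<^sub>v v)"
    by (simp only: Cons)
  also have "\<dots> = (\<Prod>\<mu>\<leftarrow>ms. e - \<mu>) \<cdot>\<^sub>v ((e - \<mu>) \<cdot>\<^sub>v v)"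
    using A v by (simp add: mult_mat_vec shift_mult_vec Av vec_eq_iff algebra_simps)
  finally show ?case by (simp add: smult_smult_assoc mult.commute)
qed (use v in simp)

lemma shift_commute:
  assumes A: "(A :: 'a :: comm_ring_1 mat) \<in> carrier_mat n n" and X: "X \<in> carrier_mat n n"
    and AX: "A * X = X * A"
  shows "(A - \<mu> \<cdot>\<^sub>m 1\<^sub>m n) * X = X * (A - \<mu> \<cdot>\<^sub>m 1\<^sub>m n)"
  using A X AX by (simp add: minus_mult_distrib_mat[of _ n n] mult_minus_distrib_mat[of _ n n]
      mult_smult_assoc_mat[of _ n n] mult_smult_distrib[of X n n "1\<^sub>m n" n])

lemma shifted_mat_prod_commute:
  assumes A: "(A :: 'a :: comm_ring_1 mat) \<in> carrier_mat n n"
  shows "A * shifted_mat_prod n A ms = shifted_mat_prod n A ms * A"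
proof (induct ms)
  case (Cons \<mu> ms)
  let ?S = "A - \<mu> \<cdot>\<^sub>m 1\<^sub>m n" and ?Y = "shifted_mat_prod n A ms"
  have carr: "?S \<in> carrier_mat n n" "?Y \<in> carrier_mat n n" using A by auto
  have "A * (?S * ?Y) = (A * ?S) * ?Y" using A carr by (simp add: assoc_mult_mat[of _ n n _ n _ n])
  also have "A * ?S = ?S * A" using shift_commute[OF A A refl] by simp
  also have "?S * A * ?Y = ?S * (?Y * A)"
    using A carr Cons by (simp add: assoc_mult_mat[of _ n n _ n _ n])
  also have "\<dots> = ?S * ?Y * A" using A carr by (simp add: assoc_mult_mat[of _ n n _ n _ n])
  finally show ?case by simp
qed (use A in simp)

lemma transpose_smult_mat: "transpose_mat (k \<cdot>\<^sub>m A) = k \<cdot>\<^sub>m transpose_mat A"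
  by (rule eq_matI) auto

lemma transpose_shifted_mat_prod:
  assumes A: "(A :: 'a :: comm_ring_1 mat) \<in> carrier_mat n n" and sym: "transpose_mat A = A"
  shows "transpose_mat (shifted_mat_prod n A ms) = shifted_mat_prod n A ms"
proof (induct ms)
  case (Cons \<mu> ms)
  let ?S = "A - \<mu> \<cdot>\<^sub>m 1\<^sub>m n" and ?Y = "shifted_mat_prod n A ms"
  have S: "?S \<in> carrier_mat n n" using A by (intro minus_carrier_mat smult_carrier_mat one_carrier_mat)
  have "transpose_mat ?S = ?S"
    using A sym by (metis transpose_minus transpose_one transpose_smult_mat smult_carrier_mat one_carrier_mat)
  then have "transpose_mat (?S * ?Y) = ?Y * ?S"
    using A S Cons transpose_mult[of ?S n n ?Y n] by simp
  also have "\<dots> = ?S * ?Y"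
    using shift_commute[OF A shifted_mat_prod_carrier[OF A] shifted_mat_prod_commute[OF A]] by simp
  finally show ?case by simp
qed simp

lemma shifted_mat_prod_similar:
  assumes A: "(A :: 'a :: comm_ring_1 mat) \<in> carrier_mat n n" and wit: "similar_mat_wit A B P Q"
  shows "shifted_mat_prod n A ms = P * shifted_mat_prod n B ms * Q"
proof -
  from similar_mat_witD2[OF A wit] have carr: "B \<in> carrier_mat n n" "P \<in> carrier_mat n n" "Q \<in> carrier_mat n n"
    and PQ: "P * Q = 1\<^sub>m n" and QP: "Q * P = 1\<^sub>m n" and ABPQ: "A = P * B * Q" by auto
  show ?thesis
  proof (induct ms)
    case (Cons \<mu> ms)
    let ?T = "B - \<mu> \<cdot>\<^sub>m 1\<^sub>m n" and ?Y = "shifted_mat_prod n B ms"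
    have T: "?T \<in> carrier_mat n n" using carr by (intro minus_carrier_mat smult_carrier_mat one_carrier_mat)
    have Y: "?Y \<in> carrier_mat n n" using carr by simp
    have "P * ?T * Q = P * B * Q - \<mu> \<cdot>\<^sub>m (P * Q)"
      using carr by (simp add: mult_minus_distrib_mat[of _ n n] minus_mult_distrib_mat[of _ n n]
          mult_smult_distrib[of P n n "1\<^sub>m n" n] mult_smult_assoc_mat[of _ n n])
    then have shift: "A - \<mu> \<cdot>\<^sub>m 1\<^sub>m n = P * ?T * Q" using ABPQ PQ by simp
    have "shifted_mat_prod n A (\<mu> # ms) = P * ?T * Q * (P * ?Y * Q)"
      using shift Cons by simp
    also have "\<dots> = P * ?T * (Q * P) * ?Y * Q"
      using carr T Y by (simp add: assoc_mult_mat[of _ n n _ n _ n] mult_carrier_mat[of _ n n])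
    also have "\<dots> = P * shifted_mat_prod n B (\<mu> # ms) * Q"
      using carr T Y QP by (simp add: assoc_mult_mat[of _ n n _ n _ n])
    finally show ?case .
  qed (use carr PQ in simp)
qed

lemma upper_triangular_mult:
  assumes A: "(A :: 'a :: comm_ring_1 mat) \<in> carrier_mat n n" and C: "C \<in> carrier_mat n n"
    and uA: "upper_triangular A" and uC: "upper_triangular C"
  shows "upper_triangular (A * C)" and "i < n \<Longrightarrow> (A * C) $$ (i, i) = A $$ (i, i) * C $$ (i, i)"
proof -
  have entry: "(A * C) $$ (i, j) = (\<Sum>l\<in>{0..<n}. A $$ (i, l) * C $$ (l, j))" if "i < n" "j < n" for i j
    using A C that by (simp add: scalar_prod_def)
  have vanish: "A $$ (i, l) * C $$ (l, j) = 0" if "i < n" "l < n" "\<not> (i \<le> l \<and> l \<le> j)" for i j l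
    using that upper_triangularD[OF uA, of l i] upper_triangularD[OF uC, of j l] A C
    by (cases "l < i") auto
  show "upper_triangular (A * C)"
  proof
    fix i j assume "j < i" "i < dim_row (A * C)"
    with A show "(A * C) $$ (i, j) = 0" by (simp add: entry vanish)
  qed
  assume i: "i < n"
  have "(\<Sum>l\<in>{0..<n}. A $$ (i, l) * C $$ (l, i)) = A $$ (i, i) * C $$ (i, i)"
    using i vanish[of i _ i] by (subst sum.remove[of _ i]) auto
  with i show "(A * C) $$ (i, i) = A $$ (i, i) * C $$ (i, i)" by (simp add: entry)
qed

lemma upper_triangular_shifted_mat_prod:
  assumes B: "(B :: 'a :: comm_ring_1 mat) \<in> carrier_mat n n" and uB: "upper_triangular B"
  shows "upper_triangular (shifted_mat_prod n B ms)"
    and "i < n \<Longrightarrow> shifted_mat_prod n B ms $$ (i, i) = (\<Prod>\<mu>\<leftarrow>ms. B $$ (i, i) - \<mu>)"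
proof -
  have "upper_triangular (shifted_mat_prod n B ms) \<and>
      (\<forall>i<n. shifted_mat_prod n B ms $$ (i, i) = (\<Prod>\<mu>\<leftarrow>ms. B $$ (i, i) - \<mu>))"
  proof (induct ms)
    case (Cons \<mu> ms)
    let ?T = "B - \<mu> \<cdot>\<^sub>m 1\<^sub>m n"
    have T: "?T \<in> carrier_mat n n" using B by (intro minus_carrier_mat smult_carrier_mat one_carrier_mat)
    have "upper_triangular ?T" using uB B by (intro upper_triangularI) auto
    from upper_triangular_mult[OF T shifted_mat_prod_carrier[OF B] this Cons[THEN conjunct1]]
    show ?case using Cons[THEN conjunct2] B by auto
  qed auto
  then show "upper_triangular (shifted_mat_prod n B ms)"
    and "i < n \<Longrightarrow> shifted_mat_prod n B ms $$ (i, i) = (\<Prod>\<mu>\<leftarrow>ms. B $$ (i, i) - \<mu>)" by auto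
qed

lemma strictly_upper_triangular_pow_eq_0:
  assumes N: "(N :: 'a :: comm_ring_1 mat) \<in> carrier_mat n n"
    and strict: "\<And>i j. j \<le> i \<Longrightarrow> i < n \<Longrightarrow> N $$ (i, j) = 0"
  shows "N ^\<^sub>m n = 0\<^sub>m n n"
proof -
  have "(N ^\<^sub>m k) $$ (i, j) = 0" if "i < n" "j < n" "j < i + k" for i j k
    using that
  proof (induct k arbitrary: j)
    case (Suc k)
    have Nk: "N ^\<^sub>m k \<in> carrier_mat n n" using N by simp
    have "(N ^\<^sub>m Suc k) $$ (i, j) = (\<Sum>l\<in>{0..<n}. (N ^\<^sub>m k) $$ (i, l) * N $$ (l, j))"
      using N Nk Suc.prems by (simp add: scalar_prod_def)
    also have "\<dots> = 0"
    proof (intro sum.neutral ballI)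
      fix l assume "l \<in> {0..<n}"
      then show "(N ^\<^sub>m k) $$ (i, l) * N $$ (l, j) = 0"
        using Suc strict[of j l] by (cases "l < i + k") auto
    qed
    finally show ?case .
  qed (use N in simp)
  then show ?thesis using N by (intro eq_matI) auto
qed

lemma mult_transpose_self_eq_0:
  assumes Y: "(Y :: real mat) \<in> carrier_mat n m" and YY: "Y * transpose_mat Y = 0\<^sub>m n n"
  shows "Y = 0\<^sub>m n m"
proof (rule eq_matI)
  fix i j assume "i < dim_row (0\<^sub>m n m :: real mat)" "j < dim_col (0\<^sub>m n m :: real mat)"
  then have i: "i < n" and j: "j < m" by auto
  have "row Y i \<bullet> row Y i = 0" using arg_cong[OF YY, of "\<lambda>M. M $$ (i, i)"] Y i by simp
  then have "row Y i = 0\<^sub>v m" using Y row_carrier[of Y i] conjugate_square_eq_0_vec[of "row Y i" m] by simp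
  moreover have "Y $$ (i, j) = row Y i $ j" using Y i j by simp
  ultimately show "Y $$ (i, j) = 0\<^sub>m n m $$ (i, j)" using i j by simp
qed (use Y in auto)

lemma symmetric_mult_square_eq_0:
  assumes S: "(S :: real mat) \<in> carrier_mat n n" and sym: "transpose_mat S = S"
    and X: "X \<in> carrier_mat m n" and XSS: "X * S * S = 0\<^sub>m m n"
  shows "X * S = 0\<^sub>m m n"
proof (rule mult_transpose_self_eq_0)
  have "X * S * transpose_mat (X * S) = X * S * (S * transpose_mat X)"
    using S X sym by (simp add: transpose_mult[of _ m n _ n])
  also have "\<dots> = X * S * S * transpose_mat X"
    using S X by (simp add: assoc_mult_mat[of _ m n _ n _ m])
  finally show "X * S * transpose_mat (X * S) = 0\<^sub>m m m" using X XSS by simp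
qed (use S X in simp)

lemma symmetric_nilpotent_eq_0:
  assumes S: "(S :: real mat) \<in> carrier_mat n n" and sym: "transpose_mat S = S"
    and nil: "S ^\<^sub>m k = 0\<^sub>m n n"
  shows "S = 0\<^sub>m n n"
  using nil
proof (induct k)
  case 0
  then have "1\<^sub>m n = (0\<^sub>m n n :: real mat)" using S by simp
  then have "n = 0" by (metis index_one_mat(1) index_zero_mat(1) zero_neq_one neq0_conv)
  then show ?case using S by (intro eq_matI) auto
next
  case (Suc k)
  show ?case
  proof (cases k)
    case 0
    then show ?thesis using Suc.prems S by simp
  next
    case (Suc j)
    have SSS: "S ^\<^sub>m j * S * S = 0\<^sub>m n n" using Suc \<open>S ^\<^sub>m Suc k = 0\<^sub>m n n\<close> by simp
    then have "S ^\<^sub>m j * S = 0\<^sub>m n n" using symmetric_mult_square_eq_0[OF S sym _ SSS] S by simp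
    then show ?thesis using Suc.hyps \<open>k = Suc j\<close> by simp
  qed
qed

lemma symmetric_real_mat_eigenvalue_real:
  fixes H :: "real mat"
  assumes H: "H \<in> carrier_mat n n" and sym: "transpose_mat H = H"
    and ev: "eigenvalue (map_mat complex_of_real H) a"
  shows "Im a = 0"
proof -
  have symH: "H $$ (j, i) = H $$ (i, j)" if "i < n" "j < n" for i j
    using arg_cong[OF sym, of "\<lambda>M. M $$ (i, j)"] that H by auto
  obtain v where v: "v \<in> carrier_vec n" "v \<noteq> 0\<^sub>v n" "map_mat complex_of_real H *\<^sub>v v = a \<cdot>\<^sub>v v"
    using ev H unfolding eigenvalue_def eigenvector_def by auto
  have Hv: "(\<Sum>j<n. of_real (H $$ (i, j)) * v $ j) = a * v $ i" if "i < n" for i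
    using arg_cong[OF v(3), of "\<lambda>w. w $ i"] that H v(1)
    by (simp add: scalar_prod_def atLeast0LessThan)
  define q where "q = (\<Sum>i<n. \<Sum>j<n. cnj (v $ i) * of_real (H $$ (i, j)) * v $ j)"
  define N where "N = (\<Sum>i<n. (cmod (v $ i))\<^sup>2)"
  have "q = (\<Sum>i<n. cnj (v $ i) * (\<Sum>j<n. of_real (H $$ (i, j)) * v $ j))"
    unfolding q_def by (simp add: sum_distrib_left mult.assoc)
  also have "\<dots> = (\<Sum>i<n. cnj (v $ i) * (a * v $ i))" by (simp add: Hv)
  also have "\<dots> = a * of_real N"
    by (simp add: N_def sum_distrib_left complex_norm_square mult_ac del: of_real_power)
  finally have q: "q = a * of_real N" .
  have "cnj q = (\<Sum>j<n. \<Sum>i<n. cnj (v $ j) * of_real (H $$ (j, i)) * v $ i)"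
    unfolding q_def by (subst sum.swap) (auto simp: symH mult_ac intro!: sum.cong)
  then have "cnj q = q" unfolding q_def by simp
  then have "Im q = 0" by (simp add: complex_eq_iff)
  moreover have "N > 0"
  proof -
    obtain i where i: "i < n" "v $ i \<noteq> 0" using v(1,2) by (metis vec_eq_iff carrier_vecD index_zero_vec)
    have "(cmod (v $ i))\<^sup>2 \<le> N" unfolding N_def using i by (intro member_le_sum) auto
    moreover have "(cmod (v $ i))\<^sup>2 > 0" using i by simp
    ultimately show ?thesis by linarith
  qed
  ultimately show ?thesis using q by simp
qed

lemma char_poly_symmetric_real_splits:
  fixes H :: "real mat"
  assumes H: "H \<in> carrier_mat n n" and sym: "transpose_mat H = H"
  shows "\<exists>rs. char_poly H = (\<Prod>r\<leftarrow>rs. [:-r, 1:])"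
proof -
  let ?Hc = "map_mat complex_of_real H"
  have Hc: "?Hc \<in> carrier_mat n n" using H by simp
  obtain as where as: "char_poly ?Hc = (\<Prod>a\<leftarrow>as. [:-a, 1:])"
    using char_poly_factorized[OF Hc] by blast
  have real: "of_real (Re a) = a" if "a \<in> set as" for a
  proof -
    have "poly (char_poly ?Hc) a = 0"
      unfolding as poly_prod_list using that by (auto simp: prod_list_zero_iff)
    then have "eigenvalue ?Hc a" using eigenvalue_root_char_poly[OF Hc] by simp
    then show ?thesis using symmetric_real_mat_eigenvalue_real[OF H sym] by (simp add: complex_eq_iff)
  qed
  interpret of_real: map_poly_inj_comm_ring_hom "of_real :: real \<Rightarrow> complex" ..
  have "map_poly of_real (char_poly H) = char_poly ?Hc"
    by (rule of_real_hom.char_poly_hom[OF H, symmetric])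
  also have "\<dots> = (\<Prod>r\<leftarrow>map Re as. [:-of_real r, 1:])"
    unfolding as by (simp add: o_def real cong: map_cong)
  also have "\<dots> = map_poly of_real (\<Prod>r\<leftarrow>map Re as. [:-r, 1:])"
    by (simp add: of_real.hom_prod_list o_def)
  finally show ?thesis by (intro exI[of _ "map Re as"]) simp
qed

lemma shifted_mat_prod_eigenvalues_eq_0:
  fixes H :: "real mat"
  assumes H: "H \<in> carrier_mat n n" and sym: "transpose_mat H = H"
    and ms: "\<And>e. eigenvalue H e \<Longrightarrow> e \<in> set ms"
  shows "shifted_mat_prod n H ms = 0\<^sub>m n n"
proof -
  obtain rs where rs: "char_poly H = (\<Prod>r\<leftarrow>rs. [:-r, 1:])"
    using char_poly_symmetric_real_splits[OF H sym] by blast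
  obtain B P Q where "schur_decomposition H rs = (B, P, Q)" by (cases "schur_decomposition H rs")
  from schur_decomposition[OF H rs this] have wit: "similar_mat_wit H B P Q"
    and uB: "upper_triangular B" and dB: "diag_mat B = rs" by auto
  have B: "B \<in> carrier_mat n n" using similar_mat_witD2[OF H wit] by auto
  have diag_eigenvalue: "eigenvalue H (B $$ (i, i))" if "i < n" for i
  proof -
    have "B $$ (i, i) \<in> set rs" using dB that B unfolding diag_mat_def by auto
    then have "poly (char_poly H) (B $$ (i, i)) = 0"
      unfolding rs poly_prod_list by (auto simp: prod_list_zero_iff)
    then show ?thesis using eigenvalue_root_char_poly[OF H] by simp
  qed
  define N where "N = shifted_mat_prod n B ms"
  have N: "N \<in> carrier_mat n n" using B by (simp add: N_def)
  have "N $$ (i, j) = 0" if "j \<le> i" "i < n" for i j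
  proof (cases "j = i")
    case True
    have "(\<Prod>\<mu>\<leftarrow>ms. B $$ (i, i) - \<mu>) = 0"
      using ms[OF diag_eigenvalue[OF \<open>i < n\<close>]] by (auto simp: prod_list_zero_iff)
    then show ?thesis using upper_triangular_shifted_mat_prod(2)[OF B uB] True that
      by (simp add: N_def)
  next
    case False
    then show ?thesis
      using upper_triangularD[OF upper_triangular_shifted_mat_prod(1)[OF B uB], of j i] that N
      by (simp add: N_def)
  qed
  then have "N ^\<^sub>m n = 0\<^sub>m n n" by (rule strictly_upper_triangular_pow_eq_0[OF N])
  moreover have "similar_mat_wit (shifted_mat_prod n H ms) N P Q"
    using similar_mat_witD2[OF H wit] N shifted_mat_prod_similar[OF H wit, of ms]
    by (intro similar_mat_witI[of _ _ n]) (auto simp: N_def)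
  ultimately have "shifted_mat_prod n H ms ^\<^sub>m n = 0\<^sub>m n n"
    using similar_mat_witD2[OF H wit] by (simp add: similar_mat_wit_pow_id)
  then show ?thesis
    by (rule symmetric_nilpotent_eq_0[OF shifted_mat_prod_carrier[OF H] transpose_shifted_mat_prod[OF H sym]])
qed

lemma sum_insert_index:
  assumes i: "i < n"
  shows "(\<Sum>l\<in>{0..<n-1}. f (insert_index i l)) = (\<Sum>l\<in>{0..<n} - {i}. f l)"
proof (rule sum.reindex_bij_betw)
  show "bij_betw (insert_index i) {0..<n-1} ({0..<n} - {i})"
    by (rule bij_betw_byWitness[where f' = "delete_index i"])
      (use i in \<open>auto simp: insert_delete_index insert_index_def delete_index_def\<close>)
qed

lemma eigenvalue_mat_delete:
  assumes A: "(A :: 'a :: field mat) \<in> carrier_mat n n" and i: "i < n"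
    and v: "v \<in> carrier_vec n" "v \<noteq> 0\<^sub>v n" "v $ i = 0" and Av: "A *\<^sub>v v = e \<cdot>\<^sub>v v"
  shows "eigenvalue (mat_delete A i i) e"
proof -
  define v' where "v' = vec (n - 1) (\<lambda>j. v $ insert_index i j)"
  have A': "mat_delete A i i \<in> carrier_mat (n - 1) (n - 1)" using mat_delete_carrier[OF A] .
  have v': "v' \<in> carrier_vec (n - 1)" unfolding v'_def by simp
  have "v' \<noteq> 0\<^sub>v (n - 1)"
  proof
    assume v'0: "v' = 0\<^sub>v (n - 1)"
    obtain l where l: "l < n" "v $ l \<noteq> 0" using v(1,2) by (metis vec_eq_iff carrier_vecD index_zero_vec)
    with v(3) have "l \<noteq> i" by auto
    then have "delete_index i l < n - 1" "v' $ delete_index i l = v $ l"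
      using l i by (auto simp: v'_def delete_index_def insert_delete_index)
    with v'0 l show False by simp
  qed
  moreover have "mat_delete A i i *\<^sub>v v' = e \<cdot>\<^sub>v v'"
  proof (rule eq_vecI)
    fix j assume "j < dim_vec (e \<cdot>\<^sub>v v')"
    then have j: "j < n - 1" unfolding v'_def by simp
    let ?j = "insert_index i j"
    have ij: "?j < n" using i j by (auto simp: insert_index_def)
    have "(mat_delete A i i *\<^sub>v v') $ j = (\<Sum>l\<in>{0..<n-1}. A $$ (?j, insert_index i l) * v $ insert_index i l)"
      using j A by (simp add: scalar_prod_def v'_def mat_delete_def insert_index_def)
    also have "\<dots> = (\<Sum>l\<in>{0..<n} - {i}. A $$ (?j, l) * v $ l)"
      by (rule sum_insert_index[OF i])
    also have "\<dots> = (\<Sum>l\<in>{0..<n}. A $$ (?j, l) * v $ l)"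
      using i v(3) by (subst (2) sum.remove[of _ i]) auto
    also have "\<dots> = (A *\<^sub>v v) $ ?j" using ij A v(1) by (simp add: scalar_prod_def)
    also have "\<dots> = (e \<cdot>\<^sub>v v') $ j" using Av ij j v(1) by (simp add: v'_def)
    finally show "(mat_delete A i i *\<^sub>v v') $ j = (e \<cdot>\<^sub>v v') $ j" .
  qed (use A' v' in auto)
  ultimately show ?thesis using A A' v' unfolding eigenvalue_def eigenvector_def by auto
qed

text \<open>Otherwise every principal submatrix keeps the eigenvalue e (combine u and w to kill the
  deleted coordinate), so e is a root of the derivative of the characteristic polynomial, which is
  the sum of the characteristic polynomials of the principal submatrices.\<close>
lemma simple_eigenvalue_eigenvectors_parallel:
  fixes A :: "real mat"
  assumes A: "A \<in> carrier_mat n n" and simple: "order e (char_poly A) = 1"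
    and u: "u \<in> carrier_vec n" "u \<noteq> 0\<^sub>v n" "A *\<^sub>v u = e \<cdot>\<^sub>v u"
    and w: "w \<in> carrier_vec n" "A *\<^sub>v w = e \<cdot>\<^sub>v w"
  shows "\<exists>c. w = c \<cdot>\<^sub>v u"
proof (rule ccontr)
  assume not_parallel: "\<nexists>c. w = c \<cdot>\<^sub>v u"
  have minors: "eigenvalue (mat_delete A i i) e" if i: "i < n" for i
  proof (cases "u $ i = 0")
    case True
    then show ?thesis using eigenvalue_mat_delete[OF A i u(1,2) True u(3)] by simp
  next
    case False
    define c where "c = w $ i / u $ i"
    let ?v = "w - c \<cdot>\<^sub>v u"
    have v: "?v \<in> carrier_vec n" "?v $ i = 0" using False i u(1) w(1) by (auto simp: c_def)
    have "?v \<noteq> 0\<^sub>v n"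
    proof
      assume "?v = 0\<^sub>v n"
      then have "w = c \<cdot>\<^sub>v u" using u(1) w(1) by (auto simp: vec_eq_iff)
      with not_parallel show False by blast
    qed
    moreover have "A *\<^sub>v ?v = e \<cdot>\<^sub>v ?v"
      using A u w by (auto simp: mult_minus_distrib_mat_vec mult_mat_vec vec_eq_iff algebra_simps)
    ultimately show ?thesis using eigenvalue_mat_delete[OF A i v(1) _ v(2)] by simp
  qed
  have "poly (pderiv (char_poly A)) e = (\<Sum>i<n. poly (char_poly (mat_delete A i i)) e)"
    by (simp add: pderiv_char_poly[OF A] poly_sum)
  also have "\<dots> = 0"
    using minors eigenvalue_root_char_poly[OF mat_delete_carrier[OF A]] by simp
  finally have "poly (pderiv (char_poly A)) e = 0" .
  moreover have "n \<noteq> 0" using u(1,2) by auto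
  then have "pderiv (char_poly A) \<noteq> 0"
    using degree_monic_char_poly[OF A] by (simp add: pderiv_eq_0_iff)
  moreover have "order e (pderiv (char_poly A)) = 0"
    using order_pderiv2[OF calculation(2), of e 0] simple by simp
  ultimately show False using order_eq_0_iff by blast
qed

lemma invertible_mat_iff_det_nonzero:
  assumes A: "(A :: 'a :: field mat) \<in> carrier_mat n n"
  shows "invertible_mat A \<longleftrightarrow> det A \<noteq> 0"
proof
  assume "invertible_mat A"
  then obtain B where AB: "A * B = 1\<^sub>m n" and BA: "B * A = 1\<^sub>m (dim_row B)"
    using A unfolding invertible_mat_def inverts_mat_def by auto
  have "B \<in> carrier_mat n n"
    using arg_cong[OF AB, of dim_col] arg_cong[OF BA, of dim_col] A by (auto intro: carrier_matI)
  then show "det A \<noteq> 0" using arg_cong[OF AB, of det] det_mult[OF A] by auto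
next
  assume "det A \<noteq> 0"
  from det_non_zero_imp_unit[OF A this, of undefined]
  obtain B where "B \<in> carrier_mat n n" "B * A = 1\<^sub>m n" "A * B = 1\<^sub>m n"
    unfolding Units_def by (auto simp: ring_mat_simps)
  then show "invertible_mat A" using A unfolding invertible_mat_def inverts_mat_def by auto
qed

lemma singular_shift_iff_eigenvalue:
  assumes A: "(A :: 'a :: field mat) \<in> carrier_mat n n"
  shows "\<not> invertible_mat (A - e \<cdot>\<^sub>m 1\<^sub>m n) \<longleftrightarrow> eigenvalue A e"
proof -
  have "char_matrix A e = A - e \<cdot>\<^sub>m 1\<^sub>m n"
    using A unfolding char_matrix_def by (intro eq_matI) auto
  moreover have "A - e \<cdot>\<^sub>m 1\<^sub>m n \<in> carrier_mat n n"
    using A by (intro minus_carrier_mat smult_carrier_mat one_carrier_mat)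
  ultimately show ?thesis by (simp add: eigenvalue_det[OF A] invertible_mat_iff_det_nonzero)
qed

lemma smult_vec_right_cancel:
  assumes v: "v \<in> carrier_vec n" "v \<noteq> 0\<^sub>v n" and eq: "a \<cdot>\<^sub>v v = b \<cdot>\<^sub>v v"
  shows "a = (b :: 'a :: field)"
proof -
  obtain i where "i < n" "v $ i \<noteq> 0" using v by (metis vec_eq_iff carrier_vecD index_zero_vec)
  then show ?thesis using arg_cong[OF eq, of "\<lambda>w. w $ i"] v(1) by simp
qed

lemma outer_mat_mult_vec:
  assumes y: "y \<in> carrier_vec n" and v: "v \<in> carrier_vec n"
  shows "(b \<cdot>\<^sub>m outer_mat y) *\<^sub>v v = (b * (y \<bullet> v)) \<cdot>\<^sub>v y"
  using y v by (intro eq_vecI)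
    (auto simp: outer_mat_def scalar_prod_def sum_distrib_left mult.commute mult.left_commute)

lemma symmetric_parallel_columns_eq_outer:
  fixes P :: "real mat"
  assumes P: "P \<in> carrier_mat n n" and sym: "transpose_mat P = P"
    and y: "y \<in> carrier_vec n" "y \<noteq> 0\<^sub>v n" and cols: "\<And>j. j < n \<Longrightarrow> \<exists>a. col P j = a \<cdot>\<^sub>v y"
  shows "\<exists>c. P = c \<cdot>\<^sub>m outer_mat y"
proof -
  obtain \<alpha> where \<alpha>: "\<And>j. j < n \<Longrightarrow> col P j = \<alpha> j \<cdot>\<^sub>v y" using cols by metis
  have P_entry: "P $$ (i, j) = \<alpha> j * y $ i" if "i < n" "j < n" for i j
    using arg_cong[OF \<alpha>[OF that(2)], of "\<lambda>w. w $ i"] that P y by simp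
  have P_sym: "P $$ (i, j) = P $$ (j, i)" if "i < n" "j < n" for i j
    using arg_cong[OF sym, of "\<lambda>M. M $$ (j, i)"] that P by simp
  obtain i0 where i0: "i0 < n" "y $ i0 \<noteq> 0" using y by (metis vec_eq_iff carrier_vecD index_zero_vec)
  define c where "c = \<alpha> i0 / y $ i0"
  have \<alpha>_c: "\<alpha> j = c * y $ j" if "j < n" for j
  proof -
    have "\<alpha> j * y $ i0 = \<alpha> i0 * y $ j"
      using P_entry[OF i0(1) that] P_entry[OF that i0(1)] P_sym[OF i0(1) that] by simp
    then show ?thesis using i0(2) by (simp add: c_def field_simps)
  qed
  have "P = c \<cdot>\<^sub>m outer_mat y"
    using P y P_entry \<alpha>_c by (intro eq_matI) (auto simp: outer_mat_def)
  then show ?thesis ..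
qed

lemma shifted_mat_prod_rank_one:
  fixes H :: "real mat"
  assumes H: "H \<in> carrier_mat n n" and sym: "transpose_mat H = H"
    and simple: "order e (char_poly H) = 1"
    and y: "y \<in> carrier_vec n" "y \<noteq> 0\<^sub>v n" "H *\<^sub>v y = e \<cdot>\<^sub>v y"
    and ms: "\<And>x. eigenvalue H x \<Longrightarrow> x \<in> insert e (set ms)"
  shows "\<exists>c. shifted_mat_prod n H ms = c \<cdot>\<^sub>m outer_mat y"
proof (rule symmetric_parallel_columns_eq_outer[OF shifted_mat_prod_carrier[OF H]
      transpose_shifted_mat_prod[OF H sym] y(1,2)])
  fix j assume j: "j < n"
  let ?P = "shifted_mat_prod n H ms"
  have P: "?P \<in> carrier_mat n n" using H by simp
  then have Pj: "col ?P j \<in> carrier_vec n" by (intro carrier_vecI) simp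
  have "(H - e \<cdot>\<^sub>m 1\<^sub>m n) * ?P = 0\<^sub>m n n"
    using shifted_mat_prod_eigenvalues_eq_0[OF H sym, of "e # ms"] ms by simp
  moreover have "H - e \<cdot>\<^sub>m 1\<^sub>m n \<in> carrier_mat n n"
    using H by (intro minus_carrier_mat smult_carrier_mat one_carrier_mat)
  ultimately have "(H - e \<cdot>\<^sub>m 1\<^sub>m n) *\<^sub>v col ?P j = 0\<^sub>v n"
    using P j by (simp flip: col_mult2)
  then have "H *\<^sub>v col ?P j = e \<cdot>\<^sub>v col ?P j" using shift_mult_vec_eq_0_iff[OF H Pj] by simp
  then show "\<exists>a. col ?P j = a \<cdot>\<^sub>v y" by (rule simple_eigenvalue_eigenvectors_parallel[OF H simple y Pj])
qed

lemma eigenvalue_of_rank_one_shifted_mat_prod: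
  fixes H :: "real mat"
  assumes H: "H \<in> carrier_mat n n" and y: "y \<in> carrier_vec n" "H *\<^sub>v y = e \<cdot>\<^sub>v y"
    and P: "shifted_mat_prod n H ms = b \<cdot>\<^sub>m outer_mat y" and ev: "eigenvalue H x"
  shows "x \<in> insert e (set ms)"
proof (rule ccontr)
  assume x: "x \<notin> insert e (set ms)"
  obtain v where v: "v \<in> carrier_vec n" "v \<noteq> 0\<^sub>v n" "H *\<^sub>v v = x \<cdot>\<^sub>v v"
    using ev H unfolding eigenvalue_def eigenvector_def by auto
  define d where "d = (\<Prod>\<mu>\<leftarrow>ms. x - \<mu>)"
  have "d \<noteq> 0" using x by (auto simp: d_def prod_list_zero_iff)
  have "d \<cdot>\<^sub>v v = (b * (y \<bullet> v)) \<cdot>\<^sub>v y"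
    using shifted_mat_prod_mult_eigenvector[OF H v(1) v(3), of ms] outer_mat_mult_vec[OF y(1) v(1)] P
    by (simp add: d_def)
  then have v_y: "v = (b * (y \<bullet> v) / d) \<cdot>\<^sub>v y"
    using \<open>d \<noteq> 0\<close> v(1) y(1) by (auto simp: vec_eq_iff field_simps)
  have "H *\<^sub>v v = e \<cdot>\<^sub>v v"
    using H y by (subst (1 2) v_y) (simp add: mult_mat_vec smult_smult_assoc mult.commute)
  then have "x = e" using smult_vec_right_cancel[OF v(1,2)] v(3) by simp
  with x show False by simp
qed

lemma exists_enumeration_with_first:
  assumes fin: "finite E" and card: "card E = k" and x: "x \<in> E"
  shows "\<exists>f :: nat \<Rightarrow> 'a. inj_on f {1..k} \<and> f 1 = x \<and> f ` {1..k} = E"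
proof -
  have "card (E - {x}) = card {2..k}" using fin card x by simp
  then obtain g where g: "bij_betw g {2..k} (E - {x})"
    using fin by (metis finite_same_card_bij finite_atLeastAtMost finite_Diff)
  define f where "f i = (if i = 1 then x else g i)" for i :: nat
  have "bij_betw f {2..k} (E - {x})" using g by (subst bij_betw_cong[of _ f g]) (auto simp: f_def)
  then have inj: "inj_on f {2..k}" and img: "f ` {2..k} = E - {x}" by (auto simp: bij_betw_def)
  have "0 < k" using card x fin by (auto simp: card_gt_0_iff)
  then have "{1..k} = insert 1 {2..k}" by auto
  moreover have "f 1 = x" by (simp add: f_def)
  ultimately show ?thesis using inj img x by (intro exI[of _ f]) (auto simp: inj_on_insert)
qed

definition spectral_product_condition :: "real mat \<Rightarrow> nat \<Rightarrow> nat \<Rightarrow> (nat \<Rightarrow> real) \<Rightarrow> bool" where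
  "spectral_product_condition H n k lam \<longleftrightarrow> inj_on lam {1..k} \<and>
     (\<forall>i\<in>{2..k}. \<not> invertible_mat (H - lam i \<cdot>\<^sub>m 1\<^sub>m n)) \<and>
     (\<exists>b y. b > 0 \<and> y \<in> carrier_vec n \<and> y \<noteq> 0\<^sub>v n \<and> H *\<^sub>v y = lam 1 \<cdot>\<^sub>v y \<and>
        mat_prod_list n (map (\<lambda>i. H - lam i \<cdot>\<^sub>m 1\<^sub>m n) [2..<k+1]) = b \<cdot>\<^sub>m outer_mat y)"

lemma spectral_product_condition_imp_eigenvalues:
  fixes H :: "real mat"
  assumes H: "H \<in> carrier_mat n n" and k: "1 \<le> k" and cond: "spectral_product_condition H n k lam"
  shows "lam ` {1..k} = {x. eigenvalue H x}"
proof -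
  from cond obtain b y where sing: "\<forall>i\<in>{2..k}. \<not> invertible_mat (H - lam i \<cdot>\<^sub>m 1\<^sub>m n)"
    and y: "y \<in> carrier_vec n" "y \<noteq> 0\<^sub>v n" "H *\<^sub>v y = lam 1 \<cdot>\<^sub>v y"
    and P: "shifted_mat_prod n H (map lam [2..<k+1]) = b \<cdot>\<^sub>m outer_mat y"
    unfolding spectral_product_condition_def mat_prod_list_shifted by blast
  have range: "{1..k} = insert 1 {2..k}" using k by auto
  have "eigenvalue H (lam 1)" using H y unfolding eigenvalue_def eigenvector_def by auto
  moreover have "eigenvalue H (lam i)" if "i \<in> {2..k}" for i
    using sing that singular_shift_iff_eigenvalue[OF H] by blast
  moreover have "x \<in> lam ` {1..k}" if "eigenvalue H x" for x
    using eigenvalue_of_rank_one_shifted_mat_prod[OF H y(1,3) P that] range by auto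
  ultimately show ?thesis unfolding range by auto
qed

lemma rank_one_shifted_mat_prod_coeff_pos:
  fixes H :: "real mat"
  assumes H: "H \<in> carrier_mat n n" and y: "y \<in> carrier_vec n" "y \<noteq> 0\<^sub>v n" "H *\<^sub>v y = e \<cdot>\<^sub>v y"
    and P: "shifted_mat_prod n H ms = c \<cdot>\<^sub>m outer_mat y" and below: "\<And>\<mu>. \<mu> \<in> set ms \<Longrightarrow> \<mu> < e"
  shows "c > 0"
proof -
  define d where "d = (\<Prod>\<mu>\<leftarrow>ms. e - \<mu>)"
  have "d \<ge> 0" unfolding d_def using below by (intro prod_list_nonneg) (auto simp: less_imp_le)
  moreover have "d \<noteq> 0" unfolding d_def using below by (force simp: prod_list_zero_iff)
  moreover have "d \<cdot>\<^sub>v y = (c * (y \<bullet> y)) \<cdot>\<^sub>v y"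
    using shifted_mat_prod_mult_eigenvector[OF H y(1) y(3), of ms] outer_mat_mult_vec[OF y(1) y(1)] P
    by (simp add: d_def)
  then have "d = c * (y \<bullet> y)" by (rule smult_vec_right_cancel[OF y(1,2)])
  moreover have "y \<bullet> y > 0" using conjugate_square_greater_0_vec[OF y(1)] y(2) by simp
  ultimately show "c > 0" by (auto simp: zero_le_mult_iff)
qed

lemma card_eigenvalues_imp_spectral_product_condition:
  fixes H :: "real mat"
  assumes H: "H \<in> carrier_mat n n" and sym: "transpose_mat H = H"
    and simple: "order (largest_eigenvalue H) (char_poly H) = 1"
    and k: "1 \<le> k" and card: "card {x. eigenvalue H x} = k"
  shows "\<exists>lam. spectral_product_condition H n k lam"
proof -
  let ?E = "{x. eigenvalue H x}"
  have fin: "finite ?E" and ne: "?E \<noteq> {}" using card k card_gt_0_iff[of ?E] by auto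
  define e where "e = largest_eigenvalue H"
  have e: "e \<in> ?E" and e_max: "\<And>x. x \<in> ?E \<Longrightarrow> x \<le> e"
    using Max_in[OF fin ne] Max_ge[OF fin] by (auto simp: e_def largest_eigenvalue_def)
  obtain lam where inj: "inj_on lam {1..k}" and lam1: "lam 1 = e" and img: "lam ` {1..k} = ?E"
    using exists_enumeration_with_first[OF fin card e] by blast
  obtain y where y: "y \<in> carrier_vec n" "y \<noteq> 0\<^sub>v n" "H *\<^sub>v y = e \<cdot>\<^sub>v y"
    using e H unfolding eigenvalue_def eigenvector_def by auto
  define ms where "ms = map lam [2..<k+1]"
  have set_ms: "set ms = lam ` {2..k}" by (auto simp: ms_def)
  have range: "{1..k} = insert 1 {2..k}" using k by auto
  have below: "\<mu> < e" if \<mu>: "\<mu> \<in> set ms" for \<mu>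
  proof -
    obtain i where i: "i \<in> {2..k}" "\<mu> = lam i" using \<mu> set_ms by auto
    then have "\<mu> \<noteq> e" using inj lam1 unfolding range by (auto simp: inj_on_def)
    moreover have "\<mu> \<in> lam ` {1..k}" using i by auto
    then have "\<mu> \<le> e" using e_max img by blast
    ultimately show ?thesis by simp
  qed
  have "?E = insert e (set ms)"
    unfolding set_ms lam1[symmetric] img[symmetric] range by simp
  then obtain c where c: "shifted_mat_prod n H ms = c \<cdot>\<^sub>m outer_mat y"
    using shifted_mat_prod_rank_one[OF H sym simple[folded e_def] y] by blast
  have c_pos: "c > 0" by (rule rank_one_shifted_mat_prod_coeff_pos[OF H y c below])
  have sing: "\<not> invertible_mat (H - lam i \<cdot>\<^sub>m 1\<^sub>m n)" if "i \<in> {2..k}" for i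
  proof -
    have "lam i \<in> lam ` {1..k}" using that by auto
    then show ?thesis using img singular_shift_iff_eigenvalue[OF H] by simp
  qed
  have "mat_prod_list n (map (\<lambda>i. H - lam i \<cdot>\<^sub>m 1\<^sub>m n) [2..<k+1]) = c \<cdot>\<^sub>m outer_mat y"
    using c by (simp add: mat_prod_list_shifted ms_def)
  then show ?thesis
    unfolding spectral_product_condition_def using inj sing c_pos y lam1 by blast
qed

theorem corollary2p7:
  fixes H :: "real mat" and n k :: nat
  assumes "H \<in> carrier_mat n n"
    and "transpose_mat H = H"
    and "order (largest_eigenvalue H) (char_poly H) = 1"
    and "2 \<le> k" and "k \<le> n"
  shows "(card {x. eigenvalue H x} = k \<longleftrightarrow>
          (\<exists>lam :: nat \<Rightarrow> real. inj_on lam {1..k} \<and>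
             (\<forall>i\<in>{2..k}. \<not> invertible_mat (H - lam i \<cdot>\<^sub>m 1\<^sub>m n)) \<and>
             (\<exists>b y. b > 0 \<and> y \<in> carrier_vec n \<and> y \<noteq> 0\<^sub>v n \<and> H *\<^sub>v y = lam 1 \<cdot>\<^sub>v y \<and>
                mat_prod_list n (map (\<lambda>i. H - lam i \<cdot>\<^sub>m 1\<^sub>m n) [2..<k+1]) = b \<cdot>\<^sub>m outer_mat y)))
       \<and> (\<forall>lam :: nat \<Rightarrow> real. (inj_on lam {1..k} \<and>
             (\<forall>i\<in>{2..k}. \<not> invertible_mat (H - lam i \<cdot>\<^sub>m 1\<^sub>m n)) \<and>
             (\<exists>b y. b > 0 \<and> y \<in> carrier_vec n \<and> y \<noteq> 0\<^sub>v n \<and> H *\<^sub>v y = lam 1 \<cdot>\<^sub>v y \<and>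
                mat_prod_list n (map (\<lambda>i. H - lam i \<cdot>\<^sub>m 1\<^sub>m n) [2..<k+1]) = b \<cdot>\<^sub>m outer_mat y))
           \<longrightarrow> lam ` {1..k} = {x. eigenvalue H x})"
proof -
  have k: "1 \<le> k" using assms(4) by simp
  note eigenvalues = spectral_product_condition_imp_eigenvalues[OF assms(1) k]
  have "card {x. eigenvalue H x} = k \<longleftrightarrow> (\<exists>lam. spectral_product_condition H n k lam)"
  proof
    assume "card {x. eigenvalue H x} = k"
    then show "\<exists>lam. spectral_product_condition H n k lam"
      by (rule card_eigenvalues_imp_spectral_product_condition[OF assms(1-3) k])
  next
    assume "\<exists>lam. spectral_product_condition H n k lam"
    then obtain lam where cond: "spectral_product_condition H n k lam" ..
    then have "inj_on lam {1..k}" by (simp add: spectral_product_condition_def)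
    then show "card {x. eigenvalue H x} = k" using eigenvalues[OF cond] card_image by fastforce
  qed
  then show ?thesis using eigenvalues unfolding spectral_product_condition_def by blast
qed

end
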